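(* Let $\varphi(x)$, $x\in\mathbb{R}^n$, be given in conjunctive normal form $$\varphi(x)=\bigwedge_{i=1}^{d}\Big(\bigvee_{j=1}^{e_i} t_{ij}(x)=0\;\vee\;\bigvee_{k=1}^{f_i} u_{ik}(x)>0\Big),$$ with $t_{ij},u_{ik}\in\mathbb{R}[x_1,\dots,x_n]$, $d\ge1$ conjuncts, and at most $f$ strict order inequalities per conjunct. Then there is a polynomial $q(r,s,x)\in\mathbb{R}[r,s,x]$ of degree at most $2d-1$ in $r$ and at most $2f+1$ in $s$ such that for all $x\in\mathbb{R}^n$, $$\varphi(x)\iff(\forall r\in\mathbb{R})(\exists s\in\mathbb{R})\;q(r,s,x)=0.$$ Explicitly, one may take $$q=\Big[1-s\prod_{i=1}^d(r-i)\Big]\Big[\sum_{i=1}^d\prod_{h\neq i}(r-h)\prod_{j=1}^{e_i}t_{ij}(x)\prod_{k=1}^{f_i}\big(1-s^2u_{ik}(x)\big)\Big],$$ with $h$ ranging over $\{1,\dots,d\}\setminus\{i\}$.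
   Context: Empty products are $1$. *)

theory Defs
  imports "HOL-Analysis.Analysis"
begin

text \<open>Polynomial functions on R^n (real polynomials in the coordinates x$i).
Over the infinite field R, polynomials and polynomial functions correspond bijectively.\<close>
inductive polyfun :: "(real^'n \<Rightarrow> real) \<Rightarrow> bool" where
  const: "polyfun (\<lambda>x. c)"
| var: "polyfun (\<lambda>x. x $ i)"
| add: "polyfun p \<Longrightarrow> polyfun q \<Longrightarrow> polyfun (\<lambda>x. p x + q x)"
| mult: "polyfun p \<Longrightarrow> polyfun q \<Longrightarrow> polyfun (\<lambda>x. p x * q x)"

definition cnf_phi ::
  "nat \<Rightarrow> (nat \<Rightarrow> nat) \<Rightarrow> (nat \<Rightarrow> nat) \<Rightarrow> (nat \<Rightarrow> nat \<Rightarrow> real^'n \<Rightarrow> real)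
    \<Rightarrow> (nat \<Rightarrow> nat \<Rightarrow> real^'n \<Rightarrow> real) \<Rightarrow> real^'n \<Rightarrow> bool" where
  "cnf_phi d e fi t u x \<longleftrightarrow>
     (\<forall>i\<in>{1..d}. (\<exists>j\<in>{1..e i}. t i j x = 0) \<or> (\<exists>k\<in>{1..fi i}. u i k x > 0))"

definition q_explicit ::
  "nat \<Rightarrow> (nat \<Rightarrow> nat) \<Rightarrow> (nat \<Rightarrow> nat) \<Rightarrow> (nat \<Rightarrow> nat \<Rightarrow> real^'n \<Rightarrow> real)
    \<Rightarrow> (nat \<Rightarrow> nat \<Rightarrow> real^'n \<Rightarrow> real) \<Rightarrow> real \<Rightarrow> real \<Rightarrow> real^'n \<Rightarrow> real" where
  "q_explicit d e fi t u r s x =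
     (1 - s * (\<Prod>i=1..d. r - real i)) *
     (\<Sum>i=1..d. (\<Prod>h\<in>{1..d} - {i}. r - real h) * (\<Prod>j=1..e i. t i j x)
                 * (\<Prod>k=1..fi i. 1 - s^2 * u i k x))"

end

theory Submission
  imports Defs
begin

text \<open>At a node \<open>r = i \<in> {1..d}\<close> the first factor of \<open>q\<close> is \<open>1\<close> and the Lagrange-type sum
  collapses to a nonzero multiple of the \<open>i\<close>-th summand; this has a root \<open>s\<close> exactly when
  some \<open>t\<^sub>i\<^sub>j(x)\<close> vanishes or some \<open>1 - s\<^sup>2 u\<^sub>i\<^sub>k(x)\<close> does, i.e. some \<open>u\<^sub>i\<^sub>k(x) > 0\<close>.
  Off the nodes the choice \<open>s = 1 / \<Prod>(r - i)\<close> kills the first factor. So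
  \<open>\<forall>r. \<exists>s. q = 0\<close> says precisely that every conjunct holds.\<close>

lemma polyfun_prod:
  "finite A \<Longrightarrow> (\<And>a. a \<in> A \<Longrightarrow> polyfun (p a)) \<Longrightarrow> polyfun (\<lambda>x. \<Prod>a\<in>A. p a x)"
  by (induction A rule: finite_induct) (auto intro: polyfun.intros)

definition polyfun_bidegree_le :: "nat \<Rightarrow> nat \<Rightarrow> (real \<Rightarrow> real \<Rightarrow> real^'n \<Rightarrow> real) \<Rightarrow> bool"
  where "polyfun_bidegree_le m n F \<longleftrightarrow>
    (\<exists>c. (\<forall>a b. polyfun (c a b)) \<and>
         (\<forall>r s x. (\<Sum>a\<le>m. \<Sum>b\<le>n. c a b x * r ^ a * s ^ b) = F r s x))"

lemma polyfun_bidegree_le_const: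
  "polyfun g \<Longrightarrow> polyfun_bidegree_le 0 0 (\<lambda>r s x. g x)"
  unfolding polyfun_bidegree_le_def by (intro exI[of _ "\<lambda>a b. g"]) simp

lemma polyfun_bidegree_le_mono:
  assumes F: "polyfun_bidegree_le m n F" and "m \<le> m'" "n \<le> n'"
  shows "polyfun_bidegree_le m' n' F"
proof -
  obtain c where c: "\<And>a b. polyfun (c a b)"
    and F_eq: "\<And>r s x. (\<Sum>a\<le>m. \<Sum>b\<le>n. c a b x * r ^ a * s ^ b) = F r s x"
    using F unfolding polyfun_bidegree_le_def by blast
  define c' where "c' a b x = (if a \<le> m \<and> b \<le> n then c a b x else 0)" for a b x
  have "(\<Sum>a\<le>m'. \<Sum>b\<le>n'. c' a b x * r ^ a * s ^ b) = F r s x" for r s x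
  proof -
    have "(\<Sum>a\<le>m'. \<Sum>b\<le>n'. c' a b x * r ^ a * s ^ b)
        = (\<Sum>a\<le>m. \<Sum>b\<le>n'. c' a b x * r ^ a * s ^ b)"
      using \<open>m \<le> m'\<close> by (intro sum.mono_neutral_right) (auto simp: c'_def)
    also have "\<dots> = (\<Sum>a\<le>m. \<Sum>b\<le>n. c' a b x * r ^ a * s ^ b)"
      using \<open>n \<le> n'\<close> by (intro sum.cong refl sum.mono_neutral_right) (auto simp: c'_def)
    also have "\<dots> = F r s x"
      by (simp add: c'_def F_eq[symmetric])
    finally show ?thesis .
  qed
  moreover have "polyfun (c' a b)" for a b
    using c polyfun.const[of 0] by (cases "a \<le> m \<and> b \<le> n") (auto simp: c'_def[abs_def])
  ultimately show ?thesis
    unfolding polyfun_bidegree_le_def by blast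
qed

lemma polyfun_bidegree_le_add:
  assumes F: "polyfun_bidegree_le m n F" and G: "polyfun_bidegree_le m n G"
  shows "polyfun_bidegree_le m n (\<lambda>r s x. F r s x + G r s x)"
proof -
  obtain c where "\<And>a b. polyfun (c a b)"
    and "\<And>r s x. (\<Sum>a\<le>m. \<Sum>b\<le>n. c a b x * r ^ a * s ^ b) = F r s x"
    using F unfolding polyfun_bidegree_le_def by blast
  moreover obtain c' where "\<And>a b. polyfun (c' a b)"
    and "\<And>r s x. (\<Sum>a\<le>m. \<Sum>b\<le>n. c' a b x * r ^ a * s ^ b) = G r s x"
    using G unfolding polyfun_bidegree_le_def by blast
  ultimately show ?thesis
    unfolding polyfun_bidegree_le_def
    by (intro exI[of _ "\<lambda>a b x. c a b x + c' a b x"])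
       (auto simp: polyfun.add distrib_right sum.distrib)
qed

lemma polyfun_bidegree_le_scale:
  assumes g: "polyfun g" and F: "polyfun_bidegree_le m n F"
  shows "polyfun_bidegree_le m n (\<lambda>r s x. g x * F r s x)"
proof -
  obtain c where "\<And>a b. polyfun (c a b)"
    and F_eq: "\<And>r s x. (\<Sum>a\<le>m. \<Sum>b\<le>n. c a b x * r ^ a * s ^ b) = F r s x"
    using F unfolding polyfun_bidegree_le_def by blast
  with g show ?thesis
    unfolding polyfun_bidegree_le_def
    by (intro exI[of _ "\<lambda>a b x. g x * c a b x"])
       (auto simp: polyfun.mult sum_distrib_left mult.assoc F_eq[symmetric])
qed

lemma polyfun_bidegree_le_diff:
  "polyfun_bidegree_le m n F \<Longrightarrow> polyfun_bidegree_le m n G \<Longrightarrow>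
    polyfun_bidegree_le m n (\<lambda>r s x. F r s x - G r s x)"
  using polyfun_bidegree_le_add[of m n F "\<lambda>r s x. -1 * G r s x"]
    polyfun_bidegree_le_scale[OF polyfun.const[of "-1"], of m n G]
  by simp

lemma polyfun_bidegree_le_sum:
  "finite A \<Longrightarrow> (\<And>i. i \<in> A \<Longrightarrow> polyfun_bidegree_le m n (F i)) \<Longrightarrow>
    polyfun_bidegree_le m n (\<lambda>r s x. \<Sum>i\<in>A. F i r s x)"
proof (induction A rule: finite_induct)
  case empty
  show ?case
    using polyfun_bidegree_le_mono[OF polyfun_bidegree_le_const[OF polyfun.const[of 0]]] by simp
next
  case (insert i A)
  then show ?case
    using polyfun_bidegree_le_add[of m n "F i" "\<lambda>r s x. \<Sum>i\<in>A. F i r s x"] by simp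
qed

lemma polyfun_bidegree_le_mult_r:
  assumes F: "polyfun_bidegree_le m n F"
  shows "polyfun_bidegree_le (Suc m) n (\<lambda>r s x. r * F r s x)"
proof -
  obtain c where c: "\<And>a b. polyfun (c a b)"
    and F_eq: "\<And>r s x. (\<Sum>a\<le>m. \<Sum>b\<le>n. c a b x * r ^ a * s ^ b) = F r s x"
    using F unfolding polyfun_bidegree_le_def by blast
  define c' where "c' a b = (if a = 0 then (\<lambda>x. 0) else c (a - 1) b)" for a b
  have "polyfun (c' a b)" for a b
    using c by (simp add: c'_def polyfun.const)
  moreover have "(\<Sum>a\<le>Suc m. \<Sum>b\<le>n. c' a b x * r ^ a * s ^ b) = r * F r s x" for r s x
    unfolding F_eq[symmetric] sum.atMost_Suc_shift
    by (simp add: c'_def sum_distrib_left mult_ac)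
  ultimately show ?thesis
    unfolding polyfun_bidegree_le_def by blast
qed

lemma polyfun_bidegree_le_mult_s:
  assumes F: "polyfun_bidegree_le m n F"
  shows "polyfun_bidegree_le m (Suc n) (\<lambda>r s x. s * F r s x)"
proof -
  obtain c where c: "\<And>a b. polyfun (c a b)"
    and F_eq: "\<And>r s x. (\<Sum>a\<le>m. \<Sum>b\<le>n. c a b x * r ^ a * s ^ b) = F r s x"
    using F unfolding polyfun_bidegree_le_def by blast
  define c' where "c' a b = (if b = 0 then (\<lambda>x. 0) else c a (b - 1))" for a b
  have "polyfun (c' a b)" for a b
    using c by (simp add: c'_def polyfun.const)
  moreover have "(\<Sum>a\<le>m. \<Sum>b\<le>Suc n. c' a b x * r ^ a * s ^ b) = s * F r s x" for r s x
    unfolding F_eq[symmetric] sum.atMost_Suc_shift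
    by (simp add: c'_def sum_distrib_left mult_ac)
  ultimately show ?thesis
    unfolding polyfun_bidegree_le_def by blast
qed

lemma polyfun_bidegree_le_mult_linear_r:
  assumes "polyfun g" and F: "polyfun_bidegree_le m n F"
  shows "polyfun_bidegree_le (Suc m) n (\<lambda>r s x. (r - g x) * F r s x)"
  using polyfun_bidegree_le_diff[OF polyfun_bidegree_le_mult_r[OF F]
      polyfun_bidegree_le_mono[OF polyfun_bidegree_le_scale[OF assms]]]
  by (simp add: left_diff_distrib)

lemma polyfun_bidegree_le_mult_one_minus_sq_s:
  assumes "polyfun v" and F: "polyfun_bidegree_le m n F"
  shows "polyfun_bidegree_le m (n + 2) (\<lambda>r s x. (1 - s\<^sup>2 * v x) * F r s x)"
  using polyfun_bidegree_le_diff[OF polyfun_bidegree_le_mono[OF F]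
      polyfun_bidegree_le_mult_s[OF polyfun_bidegree_le_mult_s[OF polyfun_bidegree_le_scale[OF assms]]]]
  by (simp add: left_diff_distrib power2_eq_square mult.assoc)

lemma polyfun_bidegree_le_prod_linear_r:
  "finite A \<Longrightarrow> (\<And>a. a \<in> A \<Longrightarrow> polyfun (g a)) \<Longrightarrow> polyfun_bidegree_le m n F \<Longrightarrow>
    polyfun_bidegree_le (m + card A) n (\<lambda>r s x. (\<Prod>a\<in>A. r - g a x) * F r s x)"
proof (induction A rule: finite_induct)
  case (insert a A)
  then show ?case
    using polyfun_bidegree_le_mult_linear_r[of "g a" "m + card A" n
        "\<lambda>r s x. (\<Prod>a\<in>A. r - g a x) * F r s x"]
    by (simp add: mult.assoc)
qed simp

lemma polyfun_bidegree_le_prod_one_minus_sq_s: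
  "finite A \<Longrightarrow> (\<And>a. a \<in> A \<Longrightarrow> polyfun (v a)) \<Longrightarrow> polyfun_bidegree_le m n F \<Longrightarrow>
    polyfun_bidegree_le m (n + 2 * card A) (\<lambda>r s x. (\<Prod>a\<in>A. 1 - s\<^sup>2 * v a x) * F r s x)"
proof (induction A rule: finite_induct)
  case (insert a A)
  then show ?case
    using polyfun_bidegree_le_mult_one_minus_sq_s[of "v a" m "n + 2 * card A"
        "\<lambda>r s x. (\<Prod>a\<in>A. 1 - s\<^sup>2 * v a x) * F r s x"]
    by (simp add: mult.assoc)
qed simp

lemma q_explicit_bidegree_le:
  assumes "d \<ge> 1"
    and fi_le: "\<And>i. i \<in> {1..d} \<Longrightarrow> fi i \<le> f"
    and t: "\<And>i j. i \<in> {1..d} \<Longrightarrow> j \<in> {1..e i} \<Longrightarrow> polyfun (t i j)"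
    and u: "\<And>i k. i \<in> {1..d} \<Longrightarrow> k \<in> {1..fi i} \<Longrightarrow> polyfun (u i k)"
  shows "polyfun_bidegree_le (2*d - 1) (2*f + 1) (q_explicit d e fi t u)"
proof -
  define T where "T i r s x = (\<Prod>h\<in>{1..d} - {i}. r - real h) *
    ((\<Prod>k=1..fi i. 1 - s\<^sup>2 * u i k x) * (\<Prod>j=1..e i. t i j x))" for i r s x
  define B where "B r s x = (\<Sum>i=1..d. T i r s x)" for r s x
  have "polyfun_bidegree_le (d - 1) (2*f) (T i)" if i: "i \<in> {1..d}" for i
  proof -
    have "polyfun (\<lambda>x. \<Prod>j=1..e i. t i j x)"
      using t i by (intro polyfun_prod) auto
    then have "polyfun_bidegree_le 0 (0 + 2 * card {1..fi i})
        (\<lambda>r s x. (\<Prod>k=1..fi i. 1 - s\<^sup>2 * u i k x) * (\<Prod>j=1..e i. t i j x))"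
      using u i by (intro polyfun_bidegree_le_prod_one_minus_sq_s polyfun_bidegree_le_const) auto
    then have "polyfun_bidegree_le (0 + card ({1..d} - {i})) (2 * fi i) (T i)"
      unfolding T_def by (intro polyfun_bidegree_le_prod_linear_r polyfun.const) auto
    then show ?thesis
      using i fi_le[OF i] by (elim polyfun_bidegree_le_mono) auto
  qed
  then have B: "polyfun_bidegree_le (d - 1) (2*f) B"
    unfolding B_def by (intro polyfun_bidegree_le_sum) auto
  then have "polyfun_bidegree_le (d - 1 + card {1..d}) (2*f)
      (\<lambda>r s x. (\<Prod>i=1..d. r - real i) * B r s x)"
    by (intro polyfun_bidegree_le_prod_linear_r polyfun.const) auto
  then have "polyfun_bidegree_le (2*d - 1) (2*f + 1)
      (\<lambda>r s x. B r s x - s * ((\<Prod>i=1..d. r - real i) * B r s x))"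
    using \<open>d \<ge> 1\<close>
    by (intro polyfun_bidegree_le_diff polyfun_bidegree_le_mono[OF B]
        polyfun_bidegree_le_mono[OF polyfun_bidegree_le_mult_s]) auto
  moreover have "(\<lambda>r s x. B r s x - s * ((\<Prod>i=1..d. r - real i) * B r s x)) = q_explicit d e fi t u"
    unfolding q_explicit_def B_def T_def by (auto simp: algebra_simps intro!: ext)
  ultimately show ?thesis
    by simp
qed

lemma sum_prod_diff_at_node:
  fixes g :: "'a \<Rightarrow> 'b::comm_ring_1"
  assumes "finite A" and "i \<in> A"
  shows "(\<Sum>j\<in>A. (\<Prod>h\<in>A - {j}. g i - g h) * G j) = (\<Prod>h\<in>A - {i}. g i - g h) * G i"
proof -
  have "(\<Prod>h\<in>A - {j}. g i - g h) = 0" if "j \<in> A - {i}" for j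
    using assms that by (intro prod_zero) auto
  then have "(\<Sum>j\<in>A - {i}. (\<Prod>h\<in>A - {j}. g i - g h) * G j) = 0"
    by simp
  then show ?thesis
    using assms by (simp add: sum.remove)
qed

lemma ex_root_prod_one_minus_sq_mult_iff:
  fixes v :: "'a \<Rightarrow> real"
  assumes "finite A"
  shows "(\<exists>s. (\<Prod>a\<in>A. 1 - s\<^sup>2 * v a) = 0) \<longleftrightarrow> (\<exists>a\<in>A. v a > 0)"
proof
  assume "\<exists>s. (\<Prod>a\<in>A. 1 - s\<^sup>2 * v a) = 0"
  then obtain s a where "a \<in> A" "s\<^sup>2 * v a = 1"
    using assms by auto
  then show "\<exists>a\<in>A. v a > 0"
    by (metis zero_less_mult_pos zero_less_one zero_le_power2 order_le_less mult_zero_left)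
next
  assume "\<exists>a\<in>A. v a > 0"
  then obtain a where "a \<in> A" "v a > 0"
    by blast
  then have "1 - (1 / sqrt (v a))\<^sup>2 * v a = 0"
    by (simp add: power_divide)
  then show "\<exists>s. (\<Prod>a\<in>A. 1 - s\<^sup>2 * v a) = 0"
    using assms \<open>a \<in> A\<close> by (intro exI[of _ "1 / sqrt (v a)"] prod_zero) auto
qed

lemma q_explicit_at_node:
  assumes "i \<in> {1..d}"
  shows "q_explicit d e fi t u (real i) s x =
    (\<Prod>h\<in>{1..d} - {i}. real i - real h) *
    ((\<Prod>j=1..e i. t i j x) * (\<Prod>k=1..fi i. 1 - s\<^sup>2 * u i k x))"
proof -
  have "(\<Prod>h=1..d. real i - real h) = 0"
    using assms by (intro prod_zero) auto
  then show ?thesis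
    using sum_prod_diff_at_node[OF _ assms, of real] by (simp add: q_explicit_def mult.assoc)
qed

lemma ex_root_q_explicit_at_node_iff:
  assumes "i \<in> {1..d}"
  shows "(\<exists>s. q_explicit d e fi t u (real i) s x = 0) \<longleftrightarrow>
    (\<exists>j\<in>{1..e i}. t i j x = 0) \<or> (\<exists>k\<in>{1..fi i}. u i k x > 0)"
proof -
  have "(\<Prod>h\<in>{1..d} - {i}. real i - real h) \<noteq> 0"
    by simp
  then have "(\<exists>s. q_explicit d e fi t u (real i) s x = 0) \<longleftrightarrow>
      (\<Prod>j=1..e i. t i j x) = 0 \<or> (\<exists>s. (\<Prod>k=1..fi i. 1 - s\<^sup>2 * u i k x) = 0)"
    using assms by (simp add: q_explicit_at_node)
  moreover have "(\<Prod>j=1..e i. t i j x) = 0 \<longleftrightarrow> (\<exists>j\<in>{1..e i}. t i j x = 0)"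
    by (rule prod_zero_iff) simp
  ultimately show ?thesis
    using ex_root_prod_one_minus_sq_mult_iff[of "{1..fi i}" "\<lambda>k. u i k x"] by blast
qed

lemma ex_root_q_explicit_off_nodes:
  assumes "r \<notin> real ` {1..d}"
  shows "\<exists>s. q_explicit d e fi t u r s x = 0"
proof -
  have "(\<Prod>i=1..d. r - real i) \<noteq> 0"
    using assms by auto
  then show ?thesis
    by (intro exI[of _ "1 / (\<Prod>i=1..d. r - real i)"]) (simp add: q_explicit_def)
qed

lemma cnf_phi_iff_all_ex_root_q_explicit:
  "cnf_phi d e fi t u x \<longleftrightarrow> (\<forall>r. \<exists>s. q_explicit d e fi t u r s x = 0)"
proof -
  have "cnf_phi d e fi t u x \<longleftrightarrow> (\<forall>i\<in>{1..d}. \<exists>s. q_explicit d e fi t u (real i) s x = 0)"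
    by (simp add: cnf_phi_def ex_root_q_explicit_at_node_iff)
  also have "\<dots> \<longleftrightarrow> (\<forall>r. \<exists>s. q_explicit d e fi t u r s x = 0)"
  proof (intro iffI allI)
    fix r
    assume nodes: "\<forall>i\<in>{1..d}. \<exists>s. q_explicit d e fi t u (real i) s x = 0"
    show "\<exists>s. q_explicit d e fi t u r s x = 0"
    proof (cases "r \<in> real ` {1..d}")
      case True
      then show ?thesis using nodes by blast
    next
      case False
      then show ?thesis by (rule ex_root_q_explicit_off_nodes)
    qed
  qed simp
  finally show ?thesis .
qed

theorem theorem8p2:
  fixes d f :: nat and e fi :: "nat \<Rightarrow> nat"
    and t u :: "nat \<Rightarrow> nat \<Rightarrow> real^'n \<Rightarrow> real"
  assumes "d \<ge> 1"
    and "\<And>i. i \<in> {1..d} \<Longrightarrow> fi i \<le> f"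
    and "\<And>i j. i \<in> {1..d} \<Longrightarrow> j \<in> {1..e i} \<Longrightarrow> polyfun (t i j)"
    and "\<And>i k. i \<in> {1..d} \<Longrightarrow> k \<in> {1..fi i} \<Longrightarrow> polyfun (u i k)"
  shows "\<exists>c :: nat \<Rightarrow> nat \<Rightarrow> real^'n \<Rightarrow> real.
           (\<forall>a b. polyfun (c a b)) \<and>
           (\<forall>r s x. (\<Sum>a\<le>2*d-1. \<Sum>b\<le>2*f+1. c a b x * r ^ a * s ^ b)
                      = q_explicit d e fi t u r s x) \<and>
           (\<forall>x. cnf_phi d e fi t u x \<longleftrightarrow>
                (\<forall>r::real. \<exists>s::real. q_explicit d e fi t u r s x = 0))"
proof -
  have "polyfun_bidegree_le (2*d - 1) (2*f + 1) (q_explicit d e fi t u)"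
    using assms by (rule q_explicit_bidegree_le)
  then show ?thesis
    using cnf_phi_iff_all_ex_root_q_explicit unfolding polyfun_bidegree_le_def by blast
qed

end
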